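(* Let $S$ be finite and $X\subset S^{\mathbb Z^d}$ a $\mathbb Z^d$-topological Markov shift satisfying condition $\maltese$. Then $X$ satisfies condition $\mho$.
   Context: Notation: $\|n\|=\max_k|n_k|$, $B(n,r)=\{k:\|k-n\|\le r\}$, $F^o=\{x\in F:B(x,1)\subset F\}$, $\partial F=F\setminus F^o$; $X_\Lambda=\{x_\Lambda:x\in X\}$. A $\mathbb Z^d$-TMS is $X=\{x\in S^{\mathbb Z^d}:(x_k,(x_{k+j})_{j\in\partial B(0,1)})\in A\ \forall k\}$ for some $A\subset S\times S^{\partial B(0,1)}$. Tail relation $\mathfrak T(X)=\{(x,y)\in X^2:\exists F\text{ finite},x_{F^c}=y_{F^c}\}$. Let $\sharp:S\to\mathbb Z^S$, $\sharp(s)=e_s$ (standard basis vector), $\Psi_\sharp(x,y)=\sum_j(e_{y_j}-e_{x_j})$ on $\mathfrak T(X)$, and for finite $F$, $a,b\in X_F$, $\Psi_\sharp(a,b)=\sum_{j\in F}(e_{b_j}-e_{a_j})$; $\mathbb H_{X,\sharp}$ is the subgroup generated by $\{\Psi_\sharp(x,y):(x,y)\in\mathfrak T(X)\}$. Condition $\mho$: there is a finite $F\subset\mathbb Z^d$ such that for every $a\in X_F$, the subgroup generated by $\{\Psi_\sharp(a,b):b\in X_F,\ a_{\partial F}=b_{\partial F}\}$ equals $\mathbb H_{X,\sharp}$. Condition $\maltese$: $S=W\uplus Z$ with $Z\neq\emptyset$ such that (i) for every $x\in X$ and $z\in Z$, the configuration $x'$ with $x'_i=x_i$ for $i\neq0$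 and $x'_0=z$ lies in $X$; and (ii) if $a\in X_{[-1,1]^d}$ and $a_i\in Z$ for all $i\in[-1,1]^d\setminus\{0\}$, then for every $s\in S$ the configuration $a^{(s)}$ with $a^{(s)}_i=a_i$ for $i\neq0$ and $a^{(s)}_0=s$ lies in $X_{[-1,1]^d}$. *)

theory Defs
  imports "HOL-Library.FuncSet"
begin

text \<open>Lattice points of Z^d are functions 'd \<Rightarrow> int for a finite index type 'd
  (so d = CARD('d)); configurations are functions (('d \<Rightarrow> int) \<Rightarrow> 's),
  where the finite alphabet S is the finite type 's.\<close>

definition lnorm :: "('d::finite \<Rightarrow> int) \<Rightarrow> int" where
  "lnorm n = Max (range (\<lambda>k. \<bar>n k\<bar>))"

definition lball :: "('d::finite \<Rightarrow> int) \<Rightarrow> int \<Rightarrow> ('d \<Rightarrow> int) set" where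
  "lball n r = {k. lnorm (\<lambda>i. k i - n i) \<le> r}"

definition lint :: "('d::finite \<Rightarrow> int) set \<Rightarrow> ('d \<Rightarrow> int) set" where
  "lint F = {x \<in> F. lball x 1 \<subseteq> F}"

definition lbdry :: "('d::finite \<Rightarrow> int) set \<Rightarrow> ('d \<Rightarrow> int) set" where
  "lbdry F = F - lint F"

definition proj :: "(('d \<Rightarrow> int) \<Rightarrow> 's) set \<Rightarrow> ('d \<Rightarrow> int) set \<Rightarrow> (('d \<Rightarrow> int) \<Rightarrow> 's) set" where
  "proj X L = (\<lambda>x. restrict x L) ` X"

text \<open>The TMS defined by A \<subseteq> S \<times> S^{\<partial>B(0,1)}; elements of S^{\<partial>B(0,1)} are
  functions restricted (undefined outside) to \<partial>B(0,1).\<close>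
definition TMS :: "('s \<times> (('d::finite \<Rightarrow> int) \<Rightarrow> 's)) set \<Rightarrow> (('d \<Rightarrow> int) \<Rightarrow> 's) set" where
  "TMS A = {x. \<forall>k. (x k, restrict (\<lambda>j. x (\<lambda>i. k i + j i)) (lbdry (lball (\<lambda>_. 0) 1))) \<in> A}"

definition is_TMS :: "(('d::finite \<Rightarrow> int) \<Rightarrow> 's) set \<Rightarrow> bool" where
  "is_TMS X \<longleftrightarrow> (\<exists>A \<subseteq> UNIV \<times> extensional_funcset (lbdry (lball (\<lambda>_. 0) 1)) UNIV. X = TMS A)"

definition tail_rel :: "(('d \<Rightarrow> int) \<Rightarrow> 's) set \<Rightarrow> ((('d \<Rightarrow> int) \<Rightarrow> 's) \<times> (('d \<Rightarrow> int) \<Rightarrow> 's)) set" where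
  "tail_rel X = {(x, y). x \<in> X \<and> y \<in> X \<and> (\<exists>F. finite F \<and> (\<forall>j. j \<notin> F \<longrightarrow> x j = y j))}"

definition PsiF :: "('d \<Rightarrow> int) set \<Rightarrow> (('d \<Rightarrow> int) \<Rightarrow> 's) \<Rightarrow> (('d \<Rightarrow> int) \<Rightarrow> 's) \<Rightarrow> ('s \<Rightarrow> int)" where
  "PsiF F a b = (\<lambda>s. \<Sum>j\<in>F. (if b j = s then 1 else 0) - (if a j = s then 1 else 0))"

text \<open>\<Psi>_\<sharp>(x,y) for tail-related x,y: the sum over all j, whose nonzero terms lie in the
  finite set where x and y differ.\<close>
definition Psi :: "(('d \<Rightarrow> int) \<Rightarrow> 's) \<Rightarrow> (('d \<Rightarrow> int) \<Rightarrow> 's) \<Rightarrow> ('s \<Rightarrow> int)" where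
  "Psi x y = PsiF {j. x j \<noteq> y j} x y"

inductive_set gen_subgroup :: "('s \<Rightarrow> int) set \<Rightarrow> ('s \<Rightarrow> int) set" for G where
  base: "g \<in> G \<Longrightarrow> g \<in> gen_subgroup G"
| zero: "(\<lambda>_. 0) \<in> gen_subgroup G"
| diff: "a \<in> gen_subgroup G \<Longrightarrow> b \<in> gen_subgroup G \<Longrightarrow> (\<lambda>s. a s - b s) \<in> gen_subgroup G"

definition HX :: "(('d \<Rightarrow> int) \<Rightarrow> 's) set \<Rightarrow> ('s \<Rightarrow> int) set" where
  "HX X = gen_subgroup {Psi x y | x y. (x, y) \<in> tail_rel X}"

definition cond_mho :: "(('d::finite \<Rightarrow> int) \<Rightarrow> 's) set \<Rightarrow> bool" where
  "cond_mho X \<longleftrightarrow> (\<exists>F. finite F \<and> (\<forall>a \<in> proj X F.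
     gen_subgroup {PsiF F a b | b. b \<in> proj X F \<and> (\<forall>j \<in> lbdry F. a j = b j)} = HX X))"

definition cond_maltese :: "(('d::finite \<Rightarrow> int) \<Rightarrow> 's) set \<Rightarrow> bool" where
  "cond_maltese X \<longleftrightarrow> (\<exists>W Z. W \<inter> Z = {} \<and> W \<union> Z = UNIV \<and> Z \<noteq> {} \<and>
     (\<forall>x \<in> X. \<forall>z \<in> Z. x((\<lambda>_. 0) := z) \<in> X) \<and>
     (\<forall>a \<in> proj X (lball (\<lambda>_. 0) 1). (\<forall>i \<in> lball (\<lambda>_. 0) 1 - {(\<lambda>_. 0)}. a i \<in> Z) \<longrightarrow>
        (\<forall>s. a((\<lambda>_. 0) := s) \<in> proj X (lball (\<lambda>_. 0) 1))))"

end

theory Submission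
  imports Defs
begin

text \<open>Fix a symbol z \<in> Z. Since z may be written at any site, hence on any finite set, of a
  configuration of X, the group H_X is generated by the vectors e_s - e_z for the symbols s
  occurring in X: indeed \<Psi>(x(n := z), x) = e_{x_n} - e_z. Take F = B(0,3). Given x \<in> X,
  overwrite x by z on B(0,2) and then put an arbitrary symbol s of X at the origin. The result
  is still in X: the constraints are nearest-neighbour, and around the origin it agrees with a
  configuration carrying s at the origin surrounded by z. Both patterns agree with x on \<partial>F
  and the difference of their \<Psi>-values is e_s - e_z. Only part (i) of the hypothesis is
  needed; for a TMS it implies part (ii).\<close>

lemma lnorm_le_iff: "lnorm (n :: 'd::finite \<Rightarrow> int) \<le> r \<longleftrightarrow> (\<forall>i. \<bar>n i\<bar> \<le> r)"
  unfolding lnorm_def by (subst Max_le_iff) auto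

lemma mem_lball_iff: "k \<in> lball c r \<longleftrightarrow> (\<forall>i. \<bar>k i - c i\<bar> \<le> r)"
  by (simp add: lball_def lnorm_le_iff)

lemma finite_lball: "finite (lball (c :: 'd::finite \<Rightarrow> int) r)"
proof (rule finite_subset)
  show "lball c r \<subseteq> PiE UNIV (\<lambda>i. {c i - r..c i + r})"
  proof
    fix k assume "k \<in> lball c r"
    then have "\<bar>k i - c i\<bar> \<le> r" for i by (simp add: mem_lball_iff)
    then show "k \<in> PiE UNIV (\<lambda>i. {c i - r..c i + r})"
      by (simp add: PiE_UNIV_domain abs_le_iff add.commute diff_le_eq le_diff_eq)
  qed
qed (rule finite_PiE; simp)

lemma lball_subset_lball_add:
  assumes "k \<in> lball c r"
  shows "lball k s \<subseteq> lball c (r + s)"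
proof
  fix j assume "j \<in> lball k s"
  then have js: "\<bar>j i - k i\<bar> \<le> s" and kc: "\<bar>k i - c i\<bar> \<le> r" for i
    using assms by (simp_all add: mem_lball_iff)
  have "\<bar>j i - c i\<bar> \<le> r + s" for i
    using js[of i] kc[of i] by arith
  then show "j \<in> lball c (r + s)"
    by (simp add: mem_lball_iff)
qed

lemma lball_subset_lint: "lball c r \<subseteq> lint (lball c (r + 1))"
proof
  fix j assume "j \<in> lball c r"
  then have "lball j 1 \<subseteq> lball c (r + 1)"
    by (rule lball_subset_lball_add)
  moreover have "j \<in> lball j 1"
    by (simp add: mem_lball_iff)
  ultimately show "j \<in> lint (lball c (r + 1))"
    by (auto simp: lint_def)
qed

lemma gen_subgroup_uminus: "a \<in> gen_subgroup G \<Longrightarrow> (\<lambda>s. - a s) \<in> gen_subgroup G"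
  using gen_subgroup.diff[OF gen_subgroup.zero] by simp

lemma gen_subgroup_add:
  "a \<in> gen_subgroup G \<Longrightarrow> b \<in> gen_subgroup G \<Longrightarrow> (\<lambda>s. a s + b s) \<in> gen_subgroup G"
  using gen_subgroup.diff[of a G "\<lambda>s. - b s"] gen_subgroup_uminus[of b G] by simp

lemma gen_subgroup_mono:
  assumes "G \<subseteq> gen_subgroup H"
  shows "gen_subgroup G \<subseteq> gen_subgroup H"
proof
  fix g assume "g \<in> gen_subgroup G"
  then show "g \<in> gen_subgroup H"
    by induction (use assms in \<open>auto intro: gen_subgroup.intros\<close>)
qed

definition unit_diff :: "'s \<Rightarrow> 's \<Rightarrow> 's \<Rightarrow> int" where
  "unit_diff z s = (\<lambda>t. (if t = s then 1 else 0) - (if t = z then 1 else 0))"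

lemma PsiF_in_gen_unit_diff:
  assumes "finite D" and "\<forall>j\<in>D. a j \<in> S \<and> b j \<in> S"
  shows "PsiF D a b \<in> gen_subgroup (unit_diff z ` S)"
  using assms
proof (induction D rule: finite_induct)
  case empty
  then show ?case using gen_subgroup.zero by (simp add: PsiF_def)
next
  case (insert j D)
  have "PsiF (insert j D) a b = (\<lambda>t. PsiF D a b t + (unit_diff z (b j) t - unit_diff z (a j) t))"
    using insert.hyps by (auto simp: PsiF_def unit_diff_def fun_eq_iff)
  moreover have "(\<lambda>t. unit_diff z (b j) t - unit_diff z (a j) t) \<in> gen_subgroup (unit_diff z ` S)"
    using insert.prems by (auto intro: gen_subgroup.base gen_subgroup.diff)
  ultimately show ?case
    using insert by (simp add: gen_subgroup_add)
qed

lemma PsiF_cancel: "PsiF F a c s - PsiF F a b s = PsiF F b c s"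
  by (simp add: PsiF_def sum_subtractf[symmetric])

lemma PsiF_fun_upd:
  assumes "finite F" and "k \<in> F"
  shows "PsiF F y (y(k := s)) = unit_diff (y k) s"
proof
  fix t
  have "PsiF F y (y(k := s)) t
      = (\<Sum>j\<in>F. if j = k then unit_diff (y k) s t else 0)"
    unfolding PsiF_def unit_diff_def by (rule sum.cong) auto
  then show "PsiF F y (y(k := s)) t = unit_diff (y k) s t"
    using assms by simp
qed

lemma Psi_eq_PsiF:
  assumes "finite D" and "{j. x j \<noteq> y j} \<subseteq> D"
  shows "Psi x y = PsiF D x y"
  unfolding Psi_def PsiF_def fun_eq_iff
  using assms by (auto intro: sum.mono_neutral_left)

lemma TMS_shift:
  assumes "x \<in> TMS A"
  shows "(\<lambda>n. x (\<lambda>i. n i + k i)) \<in> TMS A"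
proof -
  have "(x (\<lambda>i. m i + k i), restrict (\<lambda>j. x (\<lambda>i. m i + k i + j i)) (lbdry (lball (\<lambda>_. 0) 1))) \<in> A"
    for m
    using assms unfolding TMS_def by blast
  then show ?thesis
    unfolding TMS_def by (simp add: ac_simps)
qed

lemma TMS_memI:
  assumes "\<forall>k. \<exists>v \<in> TMS A. \<forall>j \<in> lball k 1. v j = y j"
  shows "y \<in> TMS A"
  unfolding TMS_def
proof (intro CollectI allI)
  fix k
  obtain v where v: "v \<in> TMS A" "\<forall>j \<in> lball k 1. v j = y j"
    using assms by blast
  have "(\<lambda>i. k i + j i) \<in> lball k 1" if "j \<in> lbdry (lball (\<lambda>_. 0) 1)" for j
    using that by (auto simp: lbdry_def mem_lball_iff)
  then have "restrict (\<lambda>j. v (\<lambda>i. k i + j i)) (lbdry (lball (\<lambda>_. 0) 1))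
           = restrict (\<lambda>j. y (\<lambda>i. k i + j i)) (lbdry (lball (\<lambda>_. 0) 1))"
    using v(2) by (intro restrict_ext) auto
  moreover have "v k = y k"
    using v(2) by (simp add: mem_lball_iff)
  moreover have "(v k, restrict (\<lambda>j. v (\<lambda>i. k i + j i)) (lbdry (lball (\<lambda>_. 0) 1))) \<in> A"
    using v(1) unfolding TMS_def by blast
  ultimately show "(y k, restrict (\<lambda>j. y (\<lambda>i. k i + j i)) (lbdry (lball (\<lambda>_. 0) 1))) \<in> A"
    by simp
qed

context
  fixes A :: "('s \<times> (('d::finite \<Rightarrow> int) \<Rightarrow> 's)) set" and z :: 's
  assumes fill_origin: "\<And>x. x \<in> TMS A \<Longrightarrow> x((\<lambda>_. 0) := z) \<in> TMS A"
begin

lemma TMS_fun_upd_fill: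
  assumes "x \<in> TMS A"
  shows "x(k := z) \<in> TMS A"
proof -
  let ?u = "\<lambda>n. x (\<lambda>i. n i + k i)"
  have "?u((\<lambda>_. 0) := z) \<in> TMS A"
    using fill_origin TMS_shift[OF assms] by blast
  moreover have "(\<lambda>n. (?u((\<lambda>_. 0) := z)) (\<lambda>i. n i - k i)) = x(k := z)"
  proof
    fix n
    have "(\<lambda>i. n i - k i) = (\<lambda>_. 0) \<longleftrightarrow> n = k"
      by (auto simp: fun_eq_iff)
    then show "(?u((\<lambda>_. 0) := z)) (\<lambda>i. n i - k i) = (x(k := z)) n"
      by auto
  qed
  ultimately show ?thesis
    using TMS_shift[of _ A "\<lambda>i. - k i"] by fastforce
qed

lemma TMS_fill_finite:
  assumes "x \<in> TMS A" and "finite D"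
  shows "(\<lambda>n. if n \<in> D then z else x n) \<in> TMS A"
  using assms(2)
proof (induction D rule: finite_induct)
  case empty
  then show ?case using assms(1) by simp
next
  case (insert k D)
  have "(\<lambda>n. if n \<in> insert k D then z else x n) = (\<lambda>n. if n \<in> D then z else x n)(k := z)"
    by auto
  then show ?case
    using TMS_fun_upd_fill[OF insert.IH] by simp
qed

lemma TMS_fill_lball_centre:
  assumes x: "x \<in> TMS A" and w: "w \<in> TMS A"
  shows "(\<lambda>n. if n \<in> lball (\<lambda>_. 0) 2 then z else x n)((\<lambda>_. 0) := w (\<lambda>_. 0)) \<in> TMS A"
    (is "?y(_ := _) \<in> _")
  \<comment> \<open>Near the origin the configuration agrees with w, elsewhere with x, both overwritten by z.\<close>
proof (rule TMS_memI, rule allI)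
  fix k :: "'d \<Rightarrow> int"
  let ?w = "\<lambda>n. if n \<in> lball (\<lambda>_. 0) 2 - {\<lambda>_. 0} then z else w n"
  show "\<exists>v \<in> TMS A. \<forall>j \<in> lball k 1. v j = (?y((\<lambda>_. 0) := w (\<lambda>_. 0))) j"
  proof (cases "k \<in> lball (\<lambda>_. 0) 1")
    case True
    then have "lball k 1 \<subseteq> lball (\<lambda>_. 0) 2"
      using lball_subset_lball_add by fastforce
    moreover have "?w \<in> TMS A"
      using TMS_fill_finite[OF w] finite_lball by blast
    ultimately show ?thesis
      by (intro bexI[of _ ?w]) auto
  next
    case False
    then have "(\<lambda>_. 0) \<notin> lball k 1"
      by (auto simp: mem_lball_iff abs_minus_commute)
    moreover have "?y \<in> TMS A"
      using TMS_fill_finite[OF x] finite_lball by blast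
    ultimately show ?thesis
      by (intro bexI[of _ ?y]) auto
  qed
qed

lemma HX_TMS_eq: "HX (TMS A) = gen_subgroup (unit_diff z ` (\<Union>x \<in> TMS A. range x))"
proof
  show "HX (TMS A) \<subseteq> gen_subgroup (unit_diff z ` (\<Union>x \<in> TMS A. range x))"
    unfolding HX_def
  proof (rule gen_subgroup_mono, safe)
    fix x y assume "(x, y) \<in> tail_rel (TMS A)"
    then have "finite {j. x j \<noteq> y j}" and "x \<in> TMS A" "y \<in> TMS A"
      unfolding tail_rel_def by (auto elim: rev_finite_subset)
    then show "Psi x y \<in> gen_subgroup (unit_diff z ` (\<Union>x \<in> TMS A. range x))"
      unfolding Psi_def by (intro PsiF_in_gen_unit_diff) auto
  qed
  show "gen_subgroup (unit_diff z ` (\<Union>x \<in> TMS A. range x)) \<subseteq> HX (TMS A)"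
    unfolding HX_def
  proof (rule gen_subgroup_mono, safe)
    fix w n assume w: "w \<in> TMS A"
    let ?x = "w(n := z)"
    have "(?x, w) \<in> tail_rel (TMS A)"
      using w TMS_fun_upd_fill[OF w] unfolding tail_rel_def by (auto intro!: exI[of _ "{n}"])
    moreover have "{j. ?x j \<noteq> w j} \<subseteq> {n}"
      by auto
    then have "Psi ?x w = unit_diff z (w n)"
      using Psi_eq_PsiF[of "{n}" ?x w] PsiF_fun_upd[of "{n}" n ?x "w n"] by simp
    ultimately show "unit_diff z (w n) \<in> gen_subgroup {Psi x y |x y. (x, y) \<in> tail_rel (TMS A)}"
      by (metis (mono_tags, lifting) gen_subgroup.base mem_Collect_eq)
  qed
qed

lemma gen_boundary_moves_eq:
  assumes "a \<in> proj (TMS A) (lball (\<lambda>_. 0) 3)"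
  shows "gen_subgroup {PsiF (lball (\<lambda>_. 0) 3) a b | b. b \<in> proj (TMS A) (lball (\<lambda>_. 0) 3)
            \<and> (\<forall>j \<in> lbdry (lball (\<lambda>_. 0) 3). a j = b j)}
       = gen_subgroup (unit_diff z ` (\<Union>x \<in> TMS A. range x))"
    (is "gen_subgroup ?G = gen_subgroup ?E")
proof
  let ?F = "lball (\<lambda>_. 0::int) 3 :: ('d \<Rightarrow> int) set"
  obtain x where x: "x \<in> TMS A" and a: "a = restrict x ?F"
    using assms unfolding proj_def by blast
  show "gen_subgroup ?G \<subseteq> gen_subgroup ?E"
  proof (rule gen_subgroup_mono, safe)
    fix b assume "b \<in> proj (TMS A) ?F"
    then obtain y where "y \<in> TMS A" and "b = restrict y ?F"
      unfolding proj_def by blast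
    then show "PsiF ?F a b \<in> gen_subgroup ?E"
      using x a finite_lball by (intro PsiF_in_gen_unit_diff) auto
  qed
  show "gen_subgroup ?E \<subseteq> gen_subgroup ?G"
  proof (rule gen_subgroup_mono, safe)
    fix w n assume "w \<in> TMS A"
    then have w0: "(\<lambda>m. w (\<lambda>i. m i + n i)) \<in> TMS A"
      by (rule TMS_shift)
    define y1 where "y1 = (\<lambda>m. if m \<in> lball (\<lambda>_. 0) 2 then z else x m)"
    define y2 where "y2 = y1((\<lambda>_. 0) := w n)"
    have "y1 \<in> TMS A"
      unfolding y1_def using TMS_fill_finite[OF x finite_lball] .
    moreover have "y2 \<in> TMS A"
      unfolding y2_def y1_def using TMS_fill_lball_centre[OF x w0] by simp
    ultimately have proj: "restrict y1 ?F \<in> proj (TMS A) ?F" "restrict y2 ?F \<in> proj (TMS A) ?F"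
      by (simp_all add: proj_def)
    have "a j = restrict y1 ?F j" "a j = restrict y2 ?F j" if "j \<in> lbdry ?F" for j
    proof -
      have "j \<notin> lball (\<lambda>_. 0) 2" "j \<in> ?F"
        using that lball_subset_lint[of "\<lambda>_. 0" 2] by (auto simp: lbdry_def)
      moreover have "(\<lambda>_. 0) \<in> lball (\<lambda>_. 0::int) 2"
        by (simp add: mem_lball_iff)
      ultimately show "a j = restrict y1 ?F j" "a j = restrict y2 ?F j"
        using a by (auto simp: y1_def y2_def)
    qed
    with proj have "PsiF ?F a (restrict y1 ?F) \<in> ?G" "PsiF ?F a (restrict y2 ?F) \<in> ?G"
      by blast+
    then have "(\<lambda>s. PsiF ?F a (restrict y2 ?F) s - PsiF ?F a (restrict y1 ?F) s) \<in> gen_subgroup ?G"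
      by (intro gen_subgroup.diff gen_subgroup.base)
    moreover have "restrict y2 ?F = (restrict y1 ?F)((\<lambda>_. 0) := w n)"
      by (auto simp: y2_def mem_lball_iff)
    then have "PsiF ?F (restrict y1 ?F) (restrict y2 ?F) = unit_diff z (w n)"
      using PsiF_fun_upd[OF finite_lball, of "\<lambda>_. 0" _ 3 "restrict y1 ?F" "w n"]
      by (simp add: mem_lball_iff y1_def)
    ultimately show "unit_diff z (w n) \<in> gen_subgroup ?G"
      by (simp add: PsiF_cancel)
  qed
qed

end

theorem proposition3p2:
  fixes X :: "(('d::finite \<Rightarrow> int) \<Rightarrow> 's::finite) set"
  assumes "is_TMS X"
    and "cond_maltese X"
  shows "cond_mho X"
proof -
  obtain A where X: "X = TMS A"
    using assms(1) unfolding is_TMS_def by blast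
  obtain Z where "Z \<noteq> {}" and "\<forall>x \<in> X. \<forall>z \<in> Z. x((\<lambda>_. 0) := z) \<in> X"
    using assms(2) unfolding cond_maltese_def by blast
  then obtain z where fill_z: "\<And>x. x \<in> TMS A \<Longrightarrow> x((\<lambda>_. 0) := z) \<in> TMS A"
    unfolding X by blast
  show ?thesis
    unfolding cond_mho_def X
  proof (intro exI conjI ballI)
    show "finite (lball (\<lambda>_. 0) 3 :: ('d \<Rightarrow> int) set)"
      by (rule finite_lball)
    fix a assume "a \<in> proj (TMS A) (lball (\<lambda>_. 0) 3)"
    then show "gen_subgroup {PsiF (lball (\<lambda>_. 0) 3) a b | b. b \<in> proj (TMS A) (lball (\<lambda>_. 0) 3)
            \<and> (\<forall>j \<in> lbdry (lball (\<lambda>_. 0) 3). a j = b j)} = HX (TMS A)"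
      using gen_boundary_moves_eq[OF fill_z] HX_TMS_eq[OF fill_z] by simp
  qed
qed

end
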